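(* Let $d\in\mathbb{N}$. Then $$\mathrm{WA} = \pi(\Pi) \qquad\text{and hence}\qquad \mathrm{Bad} = \mathbb{R}^d\setminus \pi(\Pi).$$
   Context: For $z\in\mathbb{R}^d$, $\|z\|$ denotes the sup-norm distance from $z$ to $\mathbb{Z}^d$. Write $\mathbb{N}=\{1,2,3,\dots\}$. $\mathrm{Bad}=\{x\in\mathbb{R}^d : \inf_{n\in\mathbb{N}} n\|nx\|^d>0\}$ is the set of badly approximable vectors, and $\mathrm{WA}=\mathbb{R}^d\setminus\mathrm{Bad}$. For $\psi:\mathbb{N}\to\mathbb{R}_{\ge 0}$, let $W(\psi)$ be the set of pairs $(x,y)\in\mathbb{R}^d\times\mathbb{R}^d$ for which $\|nx+y\|<\psi(n)$ holds for infinitely many $n\in\mathbb{N}$. $\mathcal{D}$ is the set of all non-increasing $\psi:\mathbb{N}\to\mathbb{R}_{\ge0}$ such that $\sum_n\psi(n)^d$ diverges, and $\Pi=\bigcap_{\psi\in\mathcal{D}}W(\psi)$. $\pi:\mathbb{R}^d\times\mathbb{R}^d\to\mathbb{R}^d$ is the projection $\pi(x,y)=x$. *)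

theory Defs
  imports "HOL-Analysis.Analysis"
begin

definition dist_Z :: "real \<Rightarrow> real" where
  "dist_Z t = \<bar>t - of_int (round t)\<bar>"

definition znorm :: "real ^ 'd \<Rightarrow> real" where
  "znorm z = Max (range (\<lambda>i. dist_Z (z $ i)))"

definition Bad :: "(real ^ 'd) set" where
  "Bad = {x. (INF n\<in>{1::nat..}. real n * znorm (real n *\<^sub>R x) ^ CARD('d)) > 0}"

definition WA :: "(real ^ 'd) set" where
  "WA = UNIV - Bad"

definition W :: "(nat \<Rightarrow> real) \<Rightarrow> ((real ^ 'd) \<times> (real ^ 'd)) set" where
  "W \<psi> = {(x, y). infinite {n::nat. n \<ge> 1 \<and> znorm (real n *\<^sub>R x + y) < \<psi> n}}"

text \<open>The class D (only values on N = {1,2,...} matter; psi 0 is ignored).\<close>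
definition Dcls :: "nat \<Rightarrow> (nat \<Rightarrow> real) set" where
  "Dcls d = {\<psi>. (\<forall>n\<ge>1. \<psi> n \<ge> 0) \<and> (\<forall>m n. 1 \<le> m \<longrightarrow> m \<le> n \<longrightarrow> \<psi> n \<le> \<psi> m)
              \<and> \<not> summable (\<lambda>n. \<psi> (Suc n) ^ d)}"

definition Pi_set :: "((real ^ 'd) \<times> (real ^ 'd)) set" where
  "Pi_set = (\<Inter>\<psi>\<in>Dcls CARD('d). W \<psi>)"

end

theory Submission
  imports Defs
begin

text \<open>If \<open>x\<close> is badly approximable with constant \<open>c\<close>, then for every \<open>y\<close> any two times
  \<open>m < m'\<close> satisfy \<open>c \<le> (m' - m)(\<parallel>mx + y\<parallel> + \<parallel>m'x + y\<parallel>)\<^sup>d\<close>. Hence the running minimum of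
  \<open>\<parallel>nx + y\<parallel>\<close> is a non-increasing function with divergent \<open>d\<close>-th power series which
  \<open>nx + y\<close> undercuts at most once, so \<open>(x, y) \<notin> \<Pi>\<close>.

  If \<open>x\<close> is not badly approximable, pick \<open>q\<^sub>k\<close> with \<open>q\<^sub>k\<parallel>q\<^sub>kx\<parallel>\<^sup>d < 2\<^sup>-\<^sup>k\<close> and \<open>\<parallel>q\<^sub>kx\<parallel>\<close> at least
  halving at each step, and let \<open>y\<close> cancel all the residues of \<open>q\<^sub>kx\<close> modulo \<open>\<int>\<^sup>d\<close> at once.
  Then the times \<open>T\<^sub>K = q\<^sub>0 + \<dots> + q\<^sub>K\<^sub>-\<^sub>1\<close> satisfy \<open>\<parallel>T\<^sub>Kx + y\<parallel> \<le> 2\<parallel>q\<^sub>Kx\<parallel>\<close>; if a non-increasing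
  \<open>\<psi>\<close> were eventually below \<open>\<parallel>nx + y\<parallel>\<close>, its \<open>d\<close>-th powers would sum over the block \<open>[T\<^sub>K, T\<^sub>K\<^sub>+\<^sub>1)\<close>
  to at most \<open>q\<^sub>K(2\<parallel>q\<^sub>Kx\<parallel>)\<^sup>d < 2\<^sup>d\<^sup>-\<^sup>K\<close>, so \<open>\<Sum> \<psi>\<^sup>d\<close> would converge.\<close>

lemma dist_Z_le: "dist_Z t \<le> \<bar>t - of_int m\<bar>"
  unfolding dist_Z_def by (rule round_diff_minimal)

lemma dist_Z_nonneg: "0 \<le> dist_Z t"
  unfolding dist_Z_def by simp

lemma dist_Z_diff_le: "dist_Z (s - t) \<le> dist_Z s + dist_Z t"
proof -
  have "dist_Z (s - t) \<le> \<bar>(s - t) - of_int (round s - round t)\<bar>" by (rule dist_Z_le)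
  also have "\<dots> \<le> dist_Z s + dist_Z t" unfolding dist_Z_def by simp
  finally show ?thesis .
qed

lemma dist_Z_le_znorm: "dist_Z (z $ i) \<le> znorm z"
  unfolding znorm_def by (rule Max_ge) auto

lemma znorm_leI: "(\<And>i. dist_Z (z $ i) \<le> B) \<Longrightarrow> znorm z \<le> B"
  unfolding znorm_def by (subst Max_le_iff) auto

lemma znorm_nonneg: "0 \<le> znorm z"
  using dist_Z_le_znorm[of z undefined] dist_Z_nonneg[of "z $ undefined"] by linarith

lemma znorm_diff_le: "znorm (a - b) \<le> znorm a + znorm b"
proof (rule znorm_leI)
  fix i
  have "dist_Z ((a - b) $ i) \<le> dist_Z (a $ i) + dist_Z (b $ i)"
    using dist_Z_diff_le by simp
  then show "dist_Z ((a - b) $ i) \<le> znorm a + znorm b"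
    using dist_Z_le_znorm[of a i] dist_Z_le_znorm[of b i] by linarith
qed

lemma Bad_iff:
  fixes x :: "real ^ 'd"
  shows "x \<in> Bad \<longleftrightarrow> (\<exists>c>0. \<forall>n\<ge>1. c \<le> real n * znorm (real n *\<^sub>R x) ^ CARD('d))"
proof -
  let ?f = "\<lambda>n::nat. real n * znorm (real n *\<^sub>R x) ^ CARD('d)"
  have "bdd_below (?f ` {1..})"
    by (rule bdd_belowI[of _ 0]) (auto simp: znorm_nonneg)
  then have "Inf (?f ` {1..}) \<le> ?f n" if "n \<ge> 1" for n
    using that by (intro cINF_lower) auto
  moreover have "c \<le> Inf (?f ` {1..})" if "\<forall>n\<ge>1. c \<le> ?f n" for c
    using that by (intro cINF_greatest) auto
  ultimately show ?thesis
    unfolding Bad_def by (auto intro: less_le_trans)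
qed

lemma Bad_separation:
  fixes x y :: "real ^ 'd"
  assumes c: "\<forall>n\<ge>1. c \<le> real n * znorm (real n *\<^sub>R x) ^ CARD('d)" and "m < m'"
  shows "c \<le> real (m' - m) * (znorm (real m *\<^sub>R x + y) + znorm (real m' *\<^sub>R x + y)) ^ CARD('d)"
proof -
  have "real (m' - m) *\<^sub>R x = (real m' *\<^sub>R x + y) - (real m *\<^sub>R x + y)"
    using \<open>m < m'\<close> by (simp add: of_nat_diff scaleR_diff_left)
  then have "znorm (real (m' - m) *\<^sub>R x) \<le> znorm (real m *\<^sub>R x + y) + znorm (real m' *\<^sub>R x + y)"
    using znorm_diff_le[of "real m' *\<^sub>R x + y" "real m *\<^sub>R x + y"] by simp
  then have "real (m' - m) * znorm (real (m' - m) *\<^sub>R x) ^ CARD('d)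
      \<le> real (m' - m) * (znorm (real m *\<^sub>R x + y) + znorm (real m' *\<^sub>R x + y)) ^ CARD('d)"
    by (intro mult_left_mono power_mono) (auto simp: znorm_nonneg)
  moreover have "1 \<le> m' - m"
    using \<open>m < m'\<close> by simp
  then have "c \<le> real (m' - m) * znorm (real (m' - m) *\<^sub>R x) ^ CARD('d)"
    using c by blast
  ultimately show ?thesis by linarith
qed

definition running_min :: "(nat \<Rightarrow> real) \<Rightarrow> nat \<Rightarrow> real" where
  "running_min g n = Min (g ` {..n})"

lemma running_min_le: "m \<le> n \<Longrightarrow> running_min g n \<le> g m"
  unfolding running_min_def by (rule Min_le) auto

lemma running_min_attained: "\<exists>m\<le>n. running_min g n = g m"
proof -
  have "running_min g n \<in> g ` {..n}"
    unfolding running_min_def by (rule Min_in) auto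
  then show ?thesis by auto
qed

lemma running_min_antimono: "n \<le> n' \<Longrightarrow> running_min g n' \<le> running_min g n"
  unfolding running_min_def by (rule Min_antimono) auto

lemma running_min_pos: "(\<And>m. 0 < g m) \<Longrightarrow> 0 < running_min g n"
  using running_min_attained[of n g] by force

lemma running_min_drop:
  assumes sep: "\<And>m m'. m < m' \<Longrightarrow> c \<le> real (m' - m) * (g m + g m') ^ d"
    and pos: "\<And>m. 0 < g m"
    and drop: "running_min g n' < running_min g n"
  shows "c \<le> real n' * (2 * running_min g n) ^ d"
proof -
  obtain a where a: "a \<le> n" "running_min g n = g a"
    using running_min_attained by blast
  obtain b where b: "b \<le> n'" "running_min g n' = g b"
    using running_min_attained by blast
  have "n < b"
    using running_min_le[of b n g] b drop by (cases "b \<le> n") auto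
  then have "c \<le> real (b - a) * (g a + g b) ^ d"
    using a by (intro sep) auto
  also have "\<dots> \<le> real n' * (2 * running_min g n) ^ d"
    using a b drop pos[of a] pos[of b] by (intro mult_mono power_mono) auto
  finally show ?thesis .
qed

lemma running_min_double_stable:
  assumes sep: "\<And>m m'. m < m' \<Longrightarrow> c \<le> real (m' - m) * (g m + g m') ^ d"
    and pos: "\<And>m. 0 < g m"
    and small: "2 ^ Suc d * (real n * running_min g n ^ d) < c"
  shows "running_min g (2 * n) = running_min g n"
proof (rule ccontr)
  assume "running_min g (2 * n) \<noteq> running_min g n"
  then have "running_min g (2 * n) < running_min g n"
    using running_min_antimono[of n "2 * n" g] by simp
  then have "c \<le> real (2 * n) * (2 * running_min g n) ^ d"
    using running_min_drop[of c g d, OF sep pos] by blast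
  also have "\<dots> = 2 ^ Suc d * (real n * running_min g n ^ d)"
    by (simp add: power_mult_distrib)
  finally show False
    using small by simp
qed

lemma dyadic_terms_tendsto_zero:
  fixes f :: "nat \<Rightarrow> real"
  assumes "\<And>n. 0 \<le> f n" and "\<And>n. f (Suc n) \<le> f n" and "summable f"
  shows "(\<lambda>k. 2 ^ k * f (2 ^ k)) \<longlonglongrightarrow> 0"
proof (rule summable_LIMSEQ_zero)
  show "summable (\<lambda>k. 2 ^ k * f (2 ^ k))"
    using assms by (subst condensation_test[symmetric]) auto
qed

text \<open>By Cauchy condensation \<open>2\<^sup>k r(2\<^sup>k)\<^sup>d \<longrightarrow> 0\<close>, so eventually the running minimum \<open>r\<close> stops
  dropping between \<open>2\<^sup>k\<close> and \<open>2\<^sup>k\<^sup>+\<^sup>1\<close>; it is then constant and positive along \<open>2\<^sup>k\<close>.\<close>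
lemma running_min_not_summable:
  assumes "0 < c"
    and sep: "\<And>m m'. m < m' \<Longrightarrow> c \<le> real (m' - m) * (g m + g m') ^ d"
    and pos: "\<And>m. 0 < g m"
  shows "\<not> summable (\<lambda>n. running_min g n ^ d)"
proof
  define f where "f n = running_min g n ^ d" for n
  assume "summable (\<lambda>n. running_min g n ^ d)"
  then have f_summable: "summable f"
    unfolding f_def .
  have f_pos: "0 < f n" for n
    unfolding f_def using running_min_pos[of g, OF pos] by simp
  have "f (Suc m) \<le> f m" for m
    unfolding f_def using running_min_pos[of g, OF pos]
    by (intro power_mono running_min_antimono) (auto simp: less_imp_le)
  then have "(\<lambda>k. 2 ^ k * f (2 ^ k)) \<longlonglongrightarrow> 0"
    using f_pos f_summable by (intro dyadic_terms_tendsto_zero) (auto simp: less_imp_le)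
  then have "\<forall>\<^sub>F k in sequentially. 2 ^ k * f (2 ^ k) < c / 2 ^ Suc d"
    using \<open>0 < c\<close> by (intro order_tendstoD) auto
  then obtain K where K: "\<And>k. K \<le> k \<Longrightarrow> 2 ^ k * f (2 ^ k) < c / 2 ^ Suc d"
    unfolding eventually_sequentially by blast
  have const: "f (2 ^ k) = f (2 ^ K)" if "K \<le> k" for k
    using that
  proof (induction k rule: dec_induct)
    case (step k)
    have "2 ^ Suc d * (real (2 ^ k) * running_min g (2 ^ k) ^ d) < c"
      using K[OF step(1)] by (simp add: f_def field_simps)
    then have "running_min g (2 * 2 ^ k) = running_min g (2 ^ k)"
      using running_min_double_stable[of c g d, OF sep pos] by blast
    then show ?case using step(3) by (simp add: f_def)
  qed simp
  have "(\<lambda>k. f (2 ^ k)) \<longlonglongrightarrow> 0"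
    using LIMSEQ_subseq_LIMSEQ[OF summable_LIMSEQ_zero[OF f_summable], of "\<lambda>k. 2 ^ k"]
    by (simp add: strict_mono_def comp_def)
  then have "\<forall>\<^sub>F k in sequentially. f (2 ^ k) < f (2 ^ K)"
    using f_pos by (rule order_tendstoD)
  then obtain k0 where "\<And>k. k0 \<le> k \<Longrightarrow> f (2 ^ k) < f (2 ^ K)"
    unfolding eventually_sequentially by blast
  then have "f (2 ^ max K k0) < f (2 ^ K)"
    by simp
  then show False
    using const[of "max K k0"] by simp
qed

lemma Bad_finite_exact_hits:
  fixes x y :: "real ^ 'd"
  assumes "x \<in> Bad"
  shows "finite {n. znorm (real n *\<^sub>R x + y) = 0}"
proof -
  obtain c where "0 < c" and c: "\<forall>n\<ge>1. c \<le> real n * znorm (real n *\<^sub>R x) ^ CARD('d)"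
    using assms Bad_iff by blast
  have no_two_hits: False
    if "m < m'" "znorm (real m *\<^sub>R x + y) = 0" "znorm (real m' *\<^sub>R x + y) = 0" for m m'
    using Bad_separation[OF c \<open>m < m'\<close>, of y] \<open>0 < c\<close> that by (simp add: zero_power)
  show ?thesis
  proof (cases "\<exists>m. znorm (real m *\<^sub>R x + y) = 0")
    case True
    then obtain m where "znorm (real m *\<^sub>R x + y) = 0" by blast
    then have "{n. znorm (real n *\<^sub>R x + y) = 0} \<subseteq> {m}"
      using no_two_hits linorder_neqE_nat by blast
    then show ?thesis by (rule finite_subset) simp
  qed simp
qed

text \<open>The exact hit, if any, is replaced by \<open>1\<close> to keep the running minimum positive.\<close>
lemma Bad_imp_not_in_some_W:
  fixes x y :: "real ^ 'd"
  assumes "x \<in> Bad"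
  shows "\<exists>\<psi>\<in>Dcls CARD('d). (x, y) \<notin> W \<psi>"
proof -
  obtain c where "0 < c" and c: "\<forall>n\<ge>1. c \<le> real n * znorm (real n *\<^sub>R x) ^ CARD('d)"
    using assms Bad_iff by blast
  define dist_y where "dist_y m = znorm (real m *\<^sub>R x + y)" for m :: nat
  define g where "g m = (if dist_y m = 0 then 1 else dist_y m)" for m
  have g_pos: "0 < g m" for m
    using znorm_nonneg[of "real m *\<^sub>R x + y"] unfolding g_def dist_y_def by (simp add: less_le)
  have sep: "c \<le> real (m' - m) * (g m + g m') ^ CARD('d)" if "m < m'" for m m'
  proof -
    have "c \<le> real (m' - m) * (dist_y m + dist_y m') ^ CARD('d)"
      unfolding dist_y_def using Bad_separation[OF c that] .
    also have "\<dots> \<le> real (m' - m) * (g m + g m') ^ CARD('d)"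
      unfolding g_def by (intro mult_left_mono power_mono add_mono) (auto simp: dist_y_def znorm_nonneg)
    finally show ?thesis .
  qed
  define \<psi> where "\<psi> = running_min g"
  have "\<not> summable (\<lambda>n. \<psi> n ^ CARD('d))"
    unfolding \<psi>_def using \<open>0 < c\<close> sep g_pos by (rule running_min_not_summable)
  then have "\<psi> \<in> Dcls CARD('d)"
    unfolding Dcls_def \<psi>_def
    using running_min_pos[of g, OF g_pos] running_min_antimono
      summable_Suc_iff[of "\<lambda>n. running_min g n ^ CARD('d)"]
    by (auto simp: less_imp_le)
  moreover have "{n. n \<ge> 1 \<and> dist_y n < \<psi> n} \<subseteq> {n. dist_y n = 0}"
    using running_min_le[of _ _ g] unfolding \<psi>_def g_def by (force split: if_splits)
  then have "finite {n. n \<ge> 1 \<and> dist_y n < \<psi> n}"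
    using Bad_finite_exact_hits[OF assms, of y] unfolding dist_y_def by (rule finite_subset)
  ultimately show ?thesis
    unfolding W_def dist_y_def by auto
qed

lemma WA_approximation_sequence:
  fixes x :: "real ^ 'd"
  assumes "x \<notin> Bad"
  obtains q :: "nat \<Rightarrow> nat"
  where "\<And>k. 1 \<le> q k"
    and "\<And>k. real (q k) * znorm (real (q k) *\<^sub>R x) ^ CARD('d) < (1/2) ^ k"
    and "\<And>k. znorm (real (q (Suc k)) *\<^sub>R x) \<le> znorm (real (q k) *\<^sub>R x) / 2"
proof -
  let ?\<epsilon> = "\<lambda>n::nat. znorm (real n *\<^sub>R x)"
  have small: "\<exists>n\<ge>1. real n * ?\<epsilon> n ^ CARD('d) < \<delta>" if "0 < \<delta>" for \<delta>
    using assms that unfolding Bad_iff by (meson not_le)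
  have improve: "\<exists>m\<ge>1. real m * ?\<epsilon> m ^ CARD('d) < \<delta> \<and> ?\<epsilon> m \<le> ?\<epsilon> n / 2"
    if "1 \<le> n" "0 < \<delta>" for n \<delta>
  proof (cases "?\<epsilon> n = 0")
    case True
    then show ?thesis using that by (intro exI[of _ n]) (simp add: zero_power)
  next
    case False
    then have "0 < ?\<epsilon> n" using znorm_nonneg less_le by metis
    then obtain m where m: "1 \<le> m" "real m * ?\<epsilon> m ^ CARD('d) < min \<delta> ((?\<epsilon> n / 2) ^ CARD('d))"
      using small[of "min \<delta> ((?\<epsilon> n / 2) ^ CARD('d))"] \<open>0 < \<delta>\<close> by auto
    have "?\<epsilon> m ^ CARD('d) \<le> real m * ?\<epsilon> m ^ CARD('d)"
      using m(1) mult_right_mono[of 1 "real m" "?\<epsilon> m ^ CARD('d)"] by (simp add: znorm_nonneg)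
    with m(2) have "?\<epsilon> m ^ CARD('d) < (?\<epsilon> n / 2) ^ CARD('d)"
      by linarith
    then have "?\<epsilon> m < ?\<epsilon> n / 2"
      by (rule power_less_imp_less_base) (use \<open>0 < ?\<epsilon> n\<close> in simp)
    then show ?thesis using m by auto
  qed
  have "\<exists>q. \<forall>k. (1 \<le> q k \<and> real (q k) * ?\<epsilon> (q k) ^ CARD('d) < (1/2) ^ k)
      \<and> ?\<epsilon> (q (Suc k)) \<le> ?\<epsilon> (q k) / 2"
    by (rule dependent_nat_choice) (use small[of 1] improve in \<open>auto simp del: power_Suc\<close>)
  then show ?thesis using that by blast
qed

lemma lattice_tail_approximation:
  fixes x :: "real ^ 'd" and q :: "nat \<Rightarrow> nat"
  assumes summable: "summable (\<lambda>j. znorm (real (q j) *\<^sub>R x))"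
  obtains y where "\<And>K. znorm (real (\<Sum>j<K. q j) *\<^sub>R x + y) \<le> (\<Sum>j. znorm (real (q (j + K)) *\<^sub>R x))"
proof -
  define e where "e j = (\<chi> i. (real (q j) *\<^sub>R x) $ i - of_int (round ((real (q j) *\<^sub>R x) $ i)))" for j
  have e_le: "\<bar>e j $ i\<bar> \<le> znorm (real (q j) *\<^sub>R x)" for j i
    using dist_Z_le_znorm[of "real (q j) *\<^sub>R x" i] unfolding e_def dist_Z_def by simp
  have tail_summable: "summable (\<lambda>j. znorm (real (q (j + K)) *\<^sub>R x))" for K
    using summable_ignore_initial_segment[OF summable, of K] .
  have abs_summable: "summable (\<lambda>j. \<bar>e (j + K) $ i\<bar>)" for K i
    by (rule summable_rabs_comparison_test[OF exI[of _ 0] tail_summable[of K]]) (simp add: e_le)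
  then have e_summable: "summable (\<lambda>j. e (j + K) $ i)" for K i
    by (rule summable_rabs_cancel)
  define y where "y = (\<chi> i. - (\<Sum>j. e j $ i))"
  show ?thesis
  proof (rule that, rule znorm_leI)
    fix K i
    have "(\<Sum>j. e j $ i) = (\<Sum>j. e (j + K) $ i) + (\<Sum>j<K. e j $ i)"
      using suminf_split_initial_segment[OF e_summable[of 0 i], of K] by simp
    moreover have "(real (\<Sum>j<K. q j) *\<^sub>R x) $ i = (\<Sum>j<K. (real (q j) *\<^sub>R x) $ i)"
      by (simp add: sum_distrib_right)
    ultimately have eq: "(real (\<Sum>j<K. q j) *\<^sub>R x + y) $ i
        = of_int (\<Sum>j<K. round ((real (q j) *\<^sub>R x) $ i)) - (\<Sum>j. e (j + K) $ i)"
      unfolding y_def by (simp add: e_def sum_subtractf)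
    have "dist_Z (of_int k - t) \<le> \<bar>t\<bar>" for k t
      using dist_Z_le[of "of_int k - t" k] by simp
    then have "dist_Z ((real (\<Sum>j<K. q j) *\<^sub>R x + y) $ i) \<le> \<bar>\<Sum>j. e (j + K) $ i\<bar>"
      unfolding eq .
    also have "\<dots> \<le> (\<Sum>j. \<bar>e (j + K) $ i\<bar>)"
      using abs_summable by (rule summable_rabs)
    also have "\<dots> \<le> (\<Sum>j. znorm (real (q (j + K)) *\<^sub>R x))"
      using e_le abs_summable tail_summable by (intro suminf_le) auto
    finally show "dist_Z ((real (\<Sum>j<K. q j) *\<^sub>R x + y) $ i) \<le> (\<Sum>j. znorm (real (q (j + K)) *\<^sub>R x))" .
  qed
qed

lemma summable_if_block_sums_le:
  fixes h u :: "nat \<Rightarrow> real" and T :: "nat \<Rightarrow> nat"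
  assumes nonneg: "\<And>n. 0 \<le> h n"
    and T: "strict_mono T"
    and block: "\<And>K. sum h {T K..<T (Suc K)} \<le> u K"
    and "summable u"
  shows "summable h"
proof (rule bounded_imp_summable[OF nonneg])
  have u_nonneg: "0 \<le> u K" for K
    using sum_nonneg[of "{T K..<T (Suc K)}" h] nonneg block[of K] by simp
  have partial: "sum h {..<T K} \<le> sum h {..<T 0} + sum u {..<K}" for K
  proof (induction K)
    case (Suc K)
    have "sum h {..<T (Suc K)} = sum h {..<T K} + sum h {T K..<T (Suc K)}"
      using T by (simp add: strict_mono_Suc_iff less_imp_le lessThan_atLeast0 sum.atLeastLessThan_concat)
    then show ?case using Suc block[of K] by simp
  qed simp
  fix n
  have "(\<Sum>k\<le>n. h k) \<le> sum h {..<T (Suc n)}"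
    using seq_suble[OF T, of "Suc n"] nonneg by (intro sum_mono2) auto
  also have "\<dots> \<le> sum h {..<T 0} + sum u {..<Suc n}"
    by (rule partial)
  also have "\<dots> \<le> sum h {..<T 0} + suminf u"
    using \<open>summable u\<close> u_nonneg by (intro add_left_mono sum_le_suminf) auto
  finally show "(\<Sum>k\<le>n. h k) \<le> sum h {..<T 0} + suminf u" .
qed

lemma summable_power_if_sparse_bound:
  fixes \<psi> b :: "nat \<Rightarrow> real" and T :: "nat \<Rightarrow> nat"
  assumes nonneg: "\<And>n. T 0 \<le> n \<Longrightarrow> 0 \<le> \<psi> n"
    and antimono: "\<And>m n. T 0 \<le> m \<Longrightarrow> m \<le> n \<Longrightarrow> \<psi> n \<le> \<psi> m"
    and T: "strict_mono T"
    and bound: "\<And>K. \<psi> (T K) \<le> b K"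
    and summable: "summable (\<lambda>K. real (T (Suc K) - T K) * b K ^ d)"
  shows "summable (\<lambda>n. \<psi> n ^ d)"
proof -
  define h where "h n = (if n < T 0 then 0 else \<psi> n ^ d)" for n
  have "summable h"
  proof (rule summable_if_block_sums_le[OF _ T _ summable])
    show "0 \<le> h n" for n
      unfolding h_def using nonneg by simp
    show "sum h {T K..<T (Suc K)} \<le> real (T (Suc K) - T K) * b K ^ d" for K
    proof -
      have T0: "T 0 \<le> T K"
        using T by (simp add: strict_mono_less_eq)
      have "h n \<le> b K ^ d" if "n \<in> {T K..<T (Suc K)}" for n
      proof -
        have "h n = \<psi> n ^ d"
          using that T0 unfolding h_def by simp
        also have "\<dots> \<le> \<psi> (T K) ^ d"
          using that T0 nonneg antimono by (intro power_mono) auto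
        also have "\<dots> \<le> b K ^ d"
          using T0 nonneg bound by (intro power_mono) auto
        finally show ?thesis .
      qed
      then show ?thesis
        using sum_bounded_above[of "{T K..<T (Suc K)}" h "b K ^ d"] by simp
    qed
  qed
  then show ?thesis
    by (rule summable_cong[THEN iffD1, rotated])
      (auto simp: h_def eventually_sequentially intro!: exI[of _ "T 0"])
qed

text \<open>\<open>\<psi>\<close> is only known to stay below \<open>\<parallel>nx + y\<parallel>\<close> beyond the finitely many exceptions, so the
  sparse bound is applied to a tail of \<open>T\<close>.\<close>
lemma W_if_sparse_approximation:
  fixes x y :: "real ^ 'd" and T :: "nat \<Rightarrow> nat" and b :: "nat \<Rightarrow> real"
  assumes T: "strict_mono T"
    and approx: "\<And>K. znorm (real (T K) *\<^sub>R x + y) \<le> b K"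
    and summable: "summable (\<lambda>K. real (T (Suc K) - T K) * b K ^ CARD('d))"
    and \<psi>: "\<psi> \<in> Dcls CARD('d)"
  shows "(x, y) \<in> W \<psi>"
proof (rule ccontr)
  assume "(x, y) \<notin> W \<psi>"
  then have "finite {n. n \<ge> 1 \<and> znorm (real n *\<^sub>R x + y) < \<psi> n}"
    unfolding W_def by simp
  then obtain N where N: "\<And>n. n \<ge> 1 \<Longrightarrow> znorm (real n *\<^sub>R x + y) < \<psi> n \<Longrightarrow> n < N"
    using finite_nat_bounded by blast
  define T' where "T' K = T (K + Suc N)" for K
  have T': "strict_mono T'"
    using T unfolding T'_def strict_mono_def by simp
  have T'_ge: "Suc N \<le> T' K" for K
    using seq_suble[OF T, of "K + Suc N"] unfolding T'_def by simp
  have "summable (\<lambda>n. \<psi> n ^ CARD('d))"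
  proof (rule summable_power_if_sparse_bound[OF _ _ T'])
    show "0 \<le> \<psi> n" if "T' 0 \<le> n" for n
      using \<psi> that T'_ge[of 0] unfolding Dcls_def by auto
    show "\<psi> n \<le> \<psi> m" if "T' 0 \<le> m" "m \<le> n" for m n
      using \<psi> that T'_ge[of 0] unfolding Dcls_def by auto
    show "\<psi> (T' K) \<le> b (K + Suc N)" for K
    proof -
      have "1 \<le> T' K" "\<not> T' K < N"
        using T'_ge[of K] by auto
      then have "\<psi> (T' K) \<le> znorm (real (T' K) *\<^sub>R x + y)"
        using N[of "T' K"] by (meson not_less)
      then show ?thesis
        using approx[of "K + Suc N"] unfolding T'_def by simp
    qed
    show "summable (\<lambda>K. real (T' (Suc K) - T' K) * b (K + Suc N) ^ CARD('d))"
      using summable_ignore_initial_segment[OF summable, of "Suc N"] unfolding T'_def by simp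
  qed
  then show False
    using \<psi> summable_Suc_iff[of "\<lambda>n. \<psi> n ^ CARD('d)"] unfolding Dcls_def by simp
qed

lemma halving_sequence_tail:
  fixes a :: "nat \<Rightarrow> real"
  assumes nonneg: "\<And>k. 0 \<le> a k" and halving: "\<And>k. a (Suc k) \<le> a k / 2"
  shows "summable (\<lambda>j. a (j + K))" and "(\<Sum>j. a (j + K)) \<le> 2 * a K"
proof -
  have geometric: "a (j + K) \<le> a K * (1/2) ^ j" for j
    by (induction j) (use halving in \<open>auto intro: order_trans\<close>)
  have sums: "(\<lambda>j. a K * (1/2) ^ j) sums (2 * a K)"
    using sums_mult[OF geometric_sums[of "1/2::real"], of "a K"] by (simp add: mult.commute)
  show tail: "summable (\<lambda>j. a (j + K))"
  proof (rule summable_comparison_test[OF exI[of _ 0]])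
    show "\<forall>j\<ge>0. norm (a (j + K)) \<le> a K * (1/2) ^ j"
      using geometric nonneg by (simp add: abs_of_nonneg)
    show "summable (\<lambda>j. a K * (1/2) ^ j)"
      using sums by (rule sums_summable)
  qed
  show "(\<Sum>j. a (j + K)) \<le> 2 * a K"
    using suminf_le[OF geometric tail sums_summable[OF sums]] sums_unique[OF sums] by simp
qed

lemma WA_imp_in_all_W:
  fixes x :: "real ^ 'd"
  assumes "x \<notin> Bad"
  shows "\<exists>y. \<forall>\<psi>\<in>Dcls CARD('d). (x, y) \<in> W \<psi>"
proof -
  obtain q where q_pos: "\<And>k. 1 \<le> q k"
    and q_small: "\<And>k. real (q k) * znorm (real (q k) *\<^sub>R x) ^ CARD('d) < (1/2) ^ k"
    and q_halving: "\<And>k. znorm (real (q (Suc k)) *\<^sub>R x) \<le> znorm (real (q k) *\<^sub>R x) / 2"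
    using WA_approximation_sequence[OF assms] by blast
  define a where "a k = znorm (real (q k) *\<^sub>R x)" for k
  have "0 \<le> a k" "a (Suc k) \<le> a k / 2" for k
    unfolding a_def using znorm_nonneg q_halving by auto
  note tail = halving_sequence_tail[of a, OF this]
  obtain y where y: "\<And>K. znorm (real (\<Sum>j<K. q j) *\<^sub>R x + y) \<le> (\<Sum>j. a (j + K))"
    using lattice_tail_approximation[of q x] tail(1)[of 0] unfolding a_def by auto
  define T where "T K = (\<Sum>j<K. q j)" for K
  have "strict_mono T"
    unfolding strict_mono_Suc_iff T_def using q_pos by (simp add: Suc_le_eq)
  moreover have "znorm (real (T K) *\<^sub>R x + y) \<le> 2 * a K" for K
    using y[of K] tail(2)[of K] unfolding T_def a_def by linarith
  moreover have "summable (\<lambda>K. real (T (Suc K) - T K) * (2 * a K) ^ CARD('d))"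
  proof (rule summable_comparison_test[OF exI[of _ 0]])
    show "summable (\<lambda>K. 2 ^ CARD('d) * (1/2::real) ^ K)"
      by (intro summable_mult summable_geometric) simp
    show "\<forall>K\<ge>0. norm (real (T (Suc K) - T K) * (2 * a K) ^ CARD('d)) \<le> 2 ^ CARD('d) * (1/2) ^ K"
      using q_small unfolding T_def a_def
      by (auto simp: power_mult_distrib znorm_nonneg less_imp_le)
  qed
  ultimately show ?thesis
    using W_if_sparse_approximation[of T x y "\<lambda>K. 2 * a K"] by blast
qed

theorem theorem1:
  shows "(WA :: (real ^ 'd) set) = fst ` (Pi_set :: ((real ^ 'd) \<times> (real ^ 'd)) set)
         \<and> (Bad :: (real ^ 'd) set) = UNIV - fst ` (Pi_set :: ((real ^ 'd) \<times> (real ^ 'd)) set)"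
proof -
  have "x \<in> WA \<longleftrightarrow> (\<exists>y. (x, y) \<in> Pi_set)" for x :: "real ^ 'd"
    using WA_imp_in_all_W[of x] Bad_imp_not_in_some_W[of x] unfolding WA_def Pi_set_def by blast
  then have "(WA :: (real ^ 'd) set) = fst ` (Pi_set :: ((real ^ 'd) \<times> (real ^ 'd)) set)"
    by force
  then show ?thesis
    unfolding WA_def by auto
qed

end
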